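(* Let $\mathcal N=\{\mathbb 1\}\cup\bigcup_{i=1}^{n-1}\{U^{(1)}_{2,1}U^{(2)}_{3,2}\cdots U^{(i)}_{i+1,i}:U^{(j)}\in\{\mathrm{SWAP},\mathrm{CNOT}\}\}$, where the $U^{(j)}$ are chosen independently. Then $$M=\sum_{z\in\mathbb{F}_2^n}|\hat Z_z)(\hat Z_z|=|\hat{\mathbb 1})(\hat{\mathbb 1}|+\sum_{g\in\mathcal N}\omega(g)^\dagger|\hat Z_1)(\hat Z_1|\omega(g).$$
   Context: $d=2^n$; $(A|B)=\mathrm{Tr}(A^\dagger B)$; $|A)(B|$ is the superoperator $C\mapsto(B|C)A$; products of superoperators are compositions. $\omega(g)(A)=gAg^\dagger$, $\omega(g)^\dagger(A)=g^\dagger Ag$. $M=\sum_{x\in\mathbb{F}_2^n}|E_x)(E_x|$ with $E_x=|x\rangle\langle x|$. $Z_z=\bigotimes_iZ^{z_i}$, $\hat Z_z=Z_z/\sqrt d$, $\hat{\mathbb 1}=\mathbb 1/\sqrt d$, $Z_1=Z\otimes\mathbb 1^{\otimes(n-1)}$. For a two-qubit unitary $U$, $U_{i,j}$ denotes $U$ applied to the ordered qubit pair $(i,j)$; in particular $\mathrm{CNOT}_{j+1,j}$ has control qubit $j+1$ and target qubit $j$. *)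

theory Defs
  imports Complex_Main "Jordan_Normal_Form.Matrix"
begin

text \<open>Basis index k in {0..<2^n} encodes the computational basis state |x_1 ... x_n>,
  qubit 1 being the leftmost (most significant) tensor factor.
  qbit n k i is the value x_i (in {0,1}) of qubit i (1 <= i <= n).\<close>
definition qbit :: "nat \<Rightarrow> nat \<Rightarrow> nat \<Rightarrow> nat" where
  "qbit n k i = (k div 2 ^ (n - i)) mod 2"

definition dagger :: "complex mat \<Rightarrow> complex mat" where
  "dagger A = mat (dim_col A) (dim_row A) (\<lambda>(i, j). cnj (A $$ (j, i)))"

text \<open>Hilbert-Schmidt inner product (A|B) = Tr(A^dagger B).\<close>
definition mtrace :: "complex mat \<Rightarrow> complex" where
  "mtrace A = (\<Sum>i<dim_row A. A $$ (i, i))"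

definition hs :: "complex mat \<Rightarrow> complex mat \<Rightarrow> complex" where
  "hs A B = mtrace (dagger A * B)"

text \<open>The superoperator |A)(B| : C \<mapsto> (B|C) A.\<close>
definition ketbra :: "complex mat \<Rightarrow> complex mat \<Rightarrow> (complex mat \<Rightarrow> complex mat)" where
  "ketbra A B = (\<lambda>C. hs B C \<cdot>\<^sub>m A)"

definition msum :: "nat \<Rightarrow> ('a \<Rightarrow> complex mat) \<Rightarrow> 'a set \<Rightarrow> complex mat" where
  "msum d f S = mat d d (\<lambda>ij. \<Sum>s\<in>S. f s $$ ij)"

definition sosum :: "nat \<Rightarrow> ('a \<Rightarrow> complex mat \<Rightarrow> complex mat) \<Rightarrow> 'a set
    \<Rightarrow> (complex mat \<Rightarrow> complex mat)" where
  "sosum d F S = (\<lambda>A. msum d (\<lambda>s. F s A) S)"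

definition soplus :: "nat \<Rightarrow> (complex mat \<Rightarrow> complex mat) \<Rightarrow> (complex mat \<Rightarrow> complex mat)
    \<Rightarrow> (complex mat \<Rightarrow> complex mat)" where
  "soplus d F G = (\<lambda>A. F A + G A)"

definition omega :: "complex mat \<Rightarrow> complex mat \<Rightarrow> complex mat" where
  "omega g = (\<lambda>A. g * A * dagger g)"

definition omega_dag :: "complex mat \<Rightarrow> complex mat \<Rightarrow> complex mat" where
  "omega_dag g = (\<lambda>A. dagger g * A * g)"

definition Eproj :: "nat \<Rightarrow> nat \<Rightarrow> complex mat" where
  "Eproj n x = mat (2 ^ n) (2 ^ n) (\<lambda>(r, c). if r = x \<and> c = x then 1 else 0)"

definition Mch :: "nat \<Rightarrow> complex mat \<Rightarrow> complex mat" where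
  "Mch n = sosum (2 ^ n) (\<lambda>x. ketbra (Eproj n x) (Eproj n x)) {0..<2 ^ n}"

text \<open>Z_z for z in F_2^n, with z identified with its support S = {i. z_i = 1} \<subseteq> {1..n}:
  Z_z = diag((-1)^(sum_i z_i x_i)).\<close>
definition Zop :: "nat \<Rightarrow> nat set \<Rightarrow> complex mat" where
  "Zop n S = mat (2 ^ n) (2 ^ n)
     (\<lambda>(r, c). if r = c then (-1) ^ card {i \<in> S. qbit n r i = 1} else 0)"

definition Zhat :: "nat \<Rightarrow> nat set \<Rightarrow> complex mat" where
  "Zhat n S = (1 / complex_of_real (sqrt (2 ^ n))) \<cdot>\<^sub>m Zop n S"

definition Idhat :: "nat \<Rightarrow> complex mat" where
  "Idhat n = (1 / complex_of_real (sqrt (2 ^ n))) \<cdot>\<^sub>m 1\<^sub>m (2 ^ n)"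

text \<open>Two-qubit gates (4x4, basis |ab> with a the first qubit of the ordered pair).\<close>
definition CNOT :: "complex mat" where
  "CNOT = mat 4 4 (\<lambda>(r, c). if c = (if r \<ge> 2 then (if r = 2 then 3 else 2) else r) then 1 else 0)"

definition SWAP :: "complex mat" where
  "SWAP = mat 4 4 (\<lambda>(r, c). if c = (if r = 1 then 2 else if r = 2 then 1 else r) then 1 else 0)"

definition apply2 :: "nat \<Rightarrow> complex mat \<Rightarrow> nat \<Rightarrow> nat \<Rightarrow> complex mat" where
  "apply2 n U i j = mat (2 ^ n) (2 ^ n) (\<lambda>(r, c).
     if (\<forall>k\<in>{1..n} - {i, j}. qbit n r k = qbit n c k)
     then U $$ (2 * qbit n r i + qbit n r j, 2 * qbit n c i + qbit n c j) else 0)"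

text \<open>chain n [U1,...,Ui] = U1_{2,1} U2_{3,2} ... Ui_{i+1,i}.\<close>
definition chain :: "nat \<Rightarrow> complex mat list \<Rightarrow> complex mat" where
  "chain n us = foldr (\<lambda>(j, U) acc. apply2 n U (j + 1) j * acc)
                      (zip [1..<length us + 1] us) (1\<^sub>m (2 ^ n))"

definition Nset :: "nat \<Rightarrow> complex mat set" where
  "Nset n = {1\<^sub>m (2 ^ n)} \<union>
     (\<Union>i\<in>{1..n-1}. {chain n us | us. length us = i \<and> set us \<subseteq> {SWAP, CNOT}})"

end

theory Submission
  imports Defs
begin

text \<open>
  Every Z_z and every E_x is diagonal, and |D)(D| applied to A only sees the diagonal of A when D
  is diagonal. Hence M and the sum of the normalised |Z_z)(Z_z| are both the dephasing map
  A |-> diag A: for M this is immediate, for the Z_z it is the orthogonality of the characters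
  x |-> (-1)^(z.x) of F_2^n.

  For the second identity, CNOT and SWAP permute the computational basis, so each chain g is a
  permutation matrix and omega(g)^dagger |Z_1)(Z_1| omega(g) = |g^dagger Z_1 g)(g^dagger Z_1 g|.
  Conjugation by CNOT_{j+1,j} turns Z_j into Z_j Z_{j+1}, conjugation by SWAP_{j+1,j} turns it into
  Z_{j+1}; so for g = U^(1)_{2,1} ... U^(i)_{i+1,i} we get g^dagger Z_1 g = Z_S with
  S = {j <= i. U^(j) = CNOT} \<union> {i + 1}. Since max S = i + 1 recovers the length, this is a
  bijection from the gate sequences onto the nonempty subsets of {1..n}, and the identity
  supplies S = {}.
\<close>

section \<open>Adjoints, traces and conjugated projectors\<close>

lemma dagger_dim [simp]: "dim_row (dagger A) = dim_col A" "dim_col (dagger A) = dim_row A"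
  by (simp_all add: dagger_def)

lemma dagger_index [simp]: "i < dim_col A \<Longrightarrow> j < dim_row A \<Longrightarrow> dagger A $$ (i, j) = cnj (A $$ (j, i))"
  by (simp add: dagger_def)

lemma dagger_carrier_mat [simp]: "A \<in> carrier_mat n m \<Longrightarrow> dagger A \<in> carrier_mat m n"
  by (metis carrier_matD carrier_matI dagger_dim)

lemma dagger_dagger [simp]: "dagger (dagger A) = A"
  by (rule eq_matI) simp_all

lemma dagger_mult:
  assumes "A \<in> carrier_mat n m" "B \<in> carrier_mat m k"
  shows "dagger (A * B) = dagger B * dagger A"
proof (rule eq_matI)
  fix i j assume "i < dim_row (dagger B * dagger A)" "j < dim_col (dagger B * dagger A)"
  then have ij: "i < k" "j < n" using assms by simp_all
  have "dagger (A * B) $$ (i, j) = cnj (\<Sum>l<m. A $$ (j, l) * B $$ (l, i))"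
    using assms ij by (simp add: scalar_prod_def atLeast0LessThan)
  also have "\<dots> = (\<Sum>l<m. cnj (B $$ (l, i)) * cnj (A $$ (j, l)))"
    by (simp add: mult.commute)
  also have "\<dots> = (dagger B * dagger A) $$ (i, j)"
    using assms ij by (simp add: scalar_prod_def atLeast0LessThan)
  finally show "dagger (A * B) $$ (i, j) = (dagger B * dagger A) $$ (i, j)" .
qed simp_all

lemma mtrace_mult_comm:
  assumes "A \<in> carrier_mat n m" "B \<in> carrier_mat m n"
  shows "mtrace (A * B) = mtrace (B * A)"
proof -
  have "mtrace (A * B) = (\<Sum>i<n. \<Sum>k<m. A $$ (i, k) * B $$ (k, i))"
    using assms by (simp add: mtrace_def scalar_prod_def atLeast0LessThan)
  also have "\<dots> = (\<Sum>k<m. \<Sum>i<n. B $$ (k, i) * A $$ (i, k))"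
    by (subst sum.swap) (simp add: mult.commute)
  also have "\<dots> = mtrace (B * A)"
    using assms by (simp add: mtrace_def scalar_prod_def atLeast0LessThan)
  finally show ?thesis .
qed

lemma ketbra_carrier_mat: "B \<in> carrier_mat d d \<Longrightarrow> ketbra B C A \<in> carrier_mat d d"
  by (simp add: ketbra_def)

lemma hs_omega:
  assumes g: "g \<in> carrier_mat d d" and B: "B \<in> carrier_mat d d" and A: "A \<in> carrier_mat d d"
  shows "hs B (omega g A) = hs (omega_dag g B) A"
proof -
  have dB: "dagger B \<in> carrier_mat d d" and dg: "dagger g \<in> carrier_mat d d" using B g by simp_all
  have gA: "g * A \<in> carrier_mat d d" and dBg: "dagger B * g \<in> carrier_mat d d"
    using g A dB by (simp_all add: mult_carrier_mat)
  have dBgA: "dagger B * g * A \<in> carrier_mat d d" using dBg A by (simp add: mult_carrier_mat)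
  have "dagger B * (g * A * dagger g) = dagger B * (g * A) * dagger g"
    by (rule assoc_mult_mat[OF dB gA dg, symmetric])
  also have "dagger B * (g * A) = dagger B * g * A"
    by (rule assoc_mult_mat[OF dB g A, symmetric])
  finally have "hs B (omega g A) = mtrace ((dagger B * g * A) * dagger g)"
    by (simp add: hs_def omega_def)
  also have "\<dots> = mtrace (dagger g * (dagger B * g * A))"
    by (rule mtrace_mult_comm[OF dBgA dg])
  also have "dagger g * (dagger B * g * A) = dagger g * (dagger B * g) * A"
    by (rule assoc_mult_mat[OF dg dBg A, symmetric])
  also have "dagger g * (dagger B * g) = dagger (dagger g * B * g)"
  proof -
    have dgB: "dagger g * B \<in> carrier_mat d d" using dg B by (rule mult_carrier_mat)
    have "dagger (dagger g * B * g) = dagger g * dagger (dagger g * B)"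
      by (rule dagger_mult[OF dgB g])
    also have "dagger (dagger g * B) = dagger B * g"
      using dagger_mult[OF dg B] by simp
    finally show ?thesis ..
  qed
  finally show ?thesis by (simp add: hs_def omega_dag_def)
qed

lemma omega_dag_smult:
  assumes g: "g \<in> carrier_mat d d" and B: "B \<in> carrier_mat d d"
  shows "omega_dag g (c \<cdot>\<^sub>m B) = c \<cdot>\<^sub>m omega_dag g B"
proof -
  have dg: "dagger g \<in> carrier_mat d d" using g by simp
  have "dagger g * (c \<cdot>\<^sub>m B) * g = c \<cdot>\<^sub>m (dagger g * B) * g"
    by (simp only: mult_smult_distrib[OF dg B])
  also have "\<dots> = c \<cdot>\<^sub>m (dagger g * B * g)"
    using mult_carrier_mat[OF dg B] g by (rule mult_smult_assoc_mat)
  finally show ?thesis by (simp add: omega_dag_def)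
qed

lemma omega_dag_ketbra_omega:
  assumes "g \<in> carrier_mat d d" "B \<in> carrier_mat d d" "A \<in> carrier_mat d d"
  shows "(omega_dag g \<circ> ketbra B B \<circ> omega g) A = ketbra (omega_dag g B) (omega_dag g B) A"
  unfolding comp_def ketbra_def hs_omega[OF assms] omega_dag_smult[OF assms(1,2)] ..

section \<open>Diagonal and permutation matrices\<close>

lemma msum_cong: "(\<And>s. s \<in> S \<Longrightarrow> f s = g s) \<Longrightarrow> msum d f S = msum d g S"
  unfolding msum_def by (metis (no_types, lifting) sum.cong)

lemma msum_remove:
  assumes "finite S" "s \<in> S" "f s \<in> carrier_mat d d"
  shows "msum d f S = f s + msum d f (S - {s})"
  using assms by (intro eq_matI) (simp_all add: msum_def sum.remove)

lemma msum_reindex: "inj_on h S \<Longrightarrow> msum d f (h ` S) = msum d (f \<circ> h) S"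
  by (simp add: msum_def sum.reindex)

lemma mat_diag_index [simp]: "i < d \<Longrightarrow> j < d \<Longrightarrow> mat_diag d w $$ (i, j) = (if i = j then w i else 0)"
  by (simp add: mat_diag_def)

lemma mat_diag_dims [simp]: "dim_row (mat_diag d w) = d" "dim_col (mat_diag d w) = d"
  by (simp_all add: mat_diag_def)

lemma mat_diag_cong: "(\<And>r. r < d \<Longrightarrow> w r = v r) \<Longrightarrow> mat_diag d w = mat_diag d v"
  by (rule eq_matI) simp_all

lemma dagger_mat_diag: "dagger (mat_diag d w) = mat_diag d (\<lambda>k. cnj (w k))"
  by (rule eq_matI) simp_all

lemma smult_mat_diag: "(c :: complex) \<cdot>\<^sub>m mat_diag d w = mat_diag d (\<lambda>r. c * w r)"
  by (rule eq_matI) simp_all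

lemma hs_mat_diag:
  assumes "A \<in> carrier_mat d d"
  shows "hs (mat_diag d w) A = (\<Sum>k<d. cnj (w k) * A $$ (k, k))"
  using assms by (simp add: hs_def mtrace_def dagger_mat_diag mat_diag_mult_left)

lemma ketbra_mat_diag:
  assumes "A \<in> carrier_mat d d"
  shows "ketbra (mat_diag d v) (mat_diag d w) A = mat_diag d (\<lambda>r. (\<Sum>k<d. cnj (w k) * A $$ (k, k)) * v r)"
  using assms by (simp add: ketbra_def hs_mat_diag smult_mat_diag)

lemma msum_mat_diag: "msum d (\<lambda>s. mat_diag d (w s)) S = mat_diag d (\<lambda>r. \<Sum>s\<in>S. w s r)"
  by (rule eq_matI) (simp_all add: msum_def)

definition perm_mat :: "nat \<Rightarrow> (nat \<Rightarrow> nat) \<Rightarrow> complex mat" where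
  "perm_mat d h = mat d d (\<lambda>(r, c). if r = h c then 1 else 0)"

lemma perm_mat_index [simp]: "i < d \<Longrightarrow> j < d \<Longrightarrow> perm_mat d h $$ (i, j) = (if i = h j then 1 else 0)"
  by (simp add: perm_mat_def)

lemma perm_mat_dims [simp]: "dim_row (perm_mat d h) = d" "dim_col (perm_mat d h) = d"
  by (simp_all add: perm_mat_def)

lemma perm_mat_carrier [simp]: "perm_mat d h \<in> carrier_mat d d"
  by (rule carrier_matI) simp_all

lemma mult_perm_mat_index:
  assumes "A \<in> carrier_mat m d" "i < m" "j < d" "h j < d"
  shows "(A * perm_mat d h) $$ (i, j) = A $$ (i, h j)"
proof -
  have "(A * perm_mat d h) $$ (i, j) = (\<Sum>k<d. if k = h j then A $$ (i, k) else 0)"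
    using assms by (simp add: scalar_prod_def atLeast0LessThan if_distrib[of "\<lambda>x. _ * x"] cong: if_cong)
  then show ?thesis using assms by simp
qed

lemma perm_mat_mult:
  assumes "g ` {..<d} \<subseteq> {..<d}"
  shows "perm_mat d f * perm_mat d g = perm_mat d (f \<circ> g)"
proof (rule eq_matI)
  fix i j assume "i < dim_row (perm_mat d (f \<circ> g))" "j < dim_col (perm_mat d (f \<circ> g))"
  then have ij: "i < d" "j < d" "g j < d" using assms by auto
  then have "(perm_mat d f * perm_mat d g) $$ (i, j) = perm_mat d f $$ (i, g j)"
    by (intro mult_perm_mat_index) simp_all
  then show "(perm_mat d f * perm_mat d g) $$ (i, j) = perm_mat d (f \<circ> g) $$ (i, j)"
    using ij by simp
qed simp_all

lemma perm_mat_id: "perm_mat d id = 1\<^sub>m d"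
  by (rule eq_matI) simp_all

lemma omega_dag_perm_mat_mat_diag:
  assumes "h ` {..<d} \<subseteq> {..<d}" "inj_on h {..<d}"
  shows "omega_dag (perm_mat d h) (mat_diag d w) = mat_diag d (w \<circ> h)"
proof (rule eq_matI)
  fix i j assume "i < dim_row (mat_diag d (w \<circ> h))" "j < dim_col (mat_diag d (w \<circ> h))"
  then have ij: "i < d" "j < d" "h i < d" "h j < d" using assms(1) by auto
  have PD: "dagger (perm_mat d h) * mat_diag d w \<in> carrier_mat d d"
    by (simp add: mult_carrier_mat[of _ d d])
  have "omega_dag (perm_mat d h) (mat_diag d w) $$ (i, j) = (dagger (perm_mat d h) * mat_diag d w) $$ (i, h j)"
    unfolding omega_dag_def using PD ij by (intro mult_perm_mat_index) simp_all
  also have "\<dots> = (if h j = h i then w (h j) else 0)"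
    using ij by (simp add: mat_diag_mult_right[of _ d d])
  also have "\<dots> = mat_diag d (w \<circ> h) $$ (i, j)"
    using ij assms(2) by (auto dest: inj_onD)
  finally show "omega_dag (perm_mat d h) (mat_diag d w) $$ (i, j) = mat_diag d (w \<circ> h) $$ (i, j)" .
qed (simp_all add: omega_dag_def)

section \<open>The operators Z_S\<close>

text \<open>The diagonal of Z_S, i.e. the character x |-> (-1)^|S \<inter> x|; by the encoding of qbit,
  qubit i is bit n - i of the basis index.\<close>
definition zsign :: "nat \<Rightarrow> nat set \<Rightarrow> nat \<Rightarrow> complex" where
  "zsign n S r = (\<Prod>i\<in>S. if bit r (n - i) then -1 else 1)"

lemma qbit_eq_of_bool: "qbit n r i = of_bool (bit r (n - i))"
  by (simp add: qbit_def bit_nat_def mod_2_eq_odd)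

lemma Zop_eq_mat_diag:
  assumes "finite S"
  shows "Zop n S = mat_diag (2 ^ n) (zsign n S)"
proof (rule eq_matI)
  fix i j assume ij: "i < dim_row (mat_diag (2 ^ n) (zsign n S))" "j < dim_col (mat_diag (2 ^ n) (zsign n S))"
  have "(-1) ^ card {k \<in> S. qbit n x k = 1} = zsign n S x" for x
  proof -
    have "{k \<in> S. qbit n x k = 1} = S \<inter> {k. bit x (n - k)}"
      by (auto simp: qbit_eq_of_bool)
    then show ?thesis using assms by (simp add: zsign_def prod.If_cases)
  qed
  then show "Zop n S $$ (i, j) = mat_diag (2 ^ n) (zsign n S) $$ (i, j)"
    using ij by (simp add: Zop_def)
qed (simp_all add: Zop_def)

lemma Zhat_eq_mat_diag:
  "finite S \<Longrightarrow> Zhat n S = mat_diag (2 ^ n) (\<lambda>r. zsign n S r / complex_of_real (sqrt (2 ^ n)))"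
  by (simp add: Zhat_def Zop_eq_mat_diag smult_mat_diag)

lemma Zhat_carrier_mat: "Zhat n S \<in> carrier_mat (2 ^ n) (2 ^ n)"
  by (simp add: Zhat_def Zop_def)

lemma Idhat_eq_Zhat_empty: "Idhat n = Zhat n {}"
  by (rule eq_matI) (simp_all add: Idhat_def Zhat_def Zop_def)

lemma cnj_zsign [simp]: "cnj (zsign n S r) = zsign n S r"
  unfolding zsign_def cnj_prod by (rule prod.cong) simp_all

lemma zsign_exp:
  assumes "T \<subseteq> {1..n}" "i \<in> {1..n}"
  shows "zsign n T (2 ^ (n - i)) = (if i \<in> T then -1 else 1)"
proof -
  have "zsign n T (2 ^ (n - i)) = (\<Prod>k\<in>T. if k = i then -1 else 1)"
    unfolding zsign_def
  proof (rule prod.cong[OF refl])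
    fix k assume "k \<in> T"
    then have "k \<in> {1..n}" using assms(1) by blast
    then have "n - k = n - i \<longleftrightarrow> k = i" using assms(2) by auto
    then show "(if bit ((2::nat) ^ (n - i)) (n - k) then -1 else 1) = (if k = i then -1 else (1::complex))"
      by (simp add: bit_exp_iff)
  qed
  also have "\<dots> = (if i \<in> T then -1 else 1)"
    using finite_subset[OF assms(1)] by (simp add: prod.delta)
  finally show ?thesis .
qed

lemma nat_eq_iff_bits_below:
  assumes "(r::nat) < 2 ^ n" "c < 2 ^ n"
  shows "r = c \<longleftrightarrow> (\<forall>m<n. bit r m = bit c m)"
  using assms by (metis bit_eq_iff bit_take_bit_iff take_bit_nat_eq_self)

lemma less_exp_if_bits_above_eq:
  fixes r x :: nat
  assumes "r < 2 ^ n" "\<And>m. n \<le> m \<Longrightarrow> bit x m = bit r m"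
  shows "x < 2 ^ n"
proof -
  have "take_bit n x = x"
  proof (rule bit_eqI)
    fix m show "bit (take_bit n x) m = bit x m"
      using assms by (metis bit_take_bit_iff not_le take_bit_nat_eq_self)
  qed
  then show ?thesis by (simp add: take_bit_nat_eq_self_iff)
qed

lemma sum_zsign_mult:
  assumes "k < 2 ^ n" "r < 2 ^ n"
  shows "(\<Sum>S\<in>Pow {1..n}. zsign n S k * zsign n S r) = (if k = r then 2 ^ n else 0)"
proof -
  define f where "f i = (if bit k (n - i) then -1 else 1) * (if bit r (n - i) then -1 else (1::complex))" for i
  have "(\<Sum>S\<in>Pow {1..n}. zsign n S k * zsign n S r) = (\<Sum>S\<in>Pow {1..n}. (\<Prod>i\<in>S. f i) * (\<Prod>i\<in>{1..n} - S. 1))"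
    by (simp add: zsign_def f_def prod.distrib)
  also have "\<dots> = (\<Prod>i\<in>{1..n}. f i + 1)"
    by (rule prod_add[symmetric]) simp
  also have "\<dots> = (if k = r then 2 ^ n else 0)"
  proof (cases "k = r")
    case True
    then have "f i + 1 = 2" for i by (simp add: f_def)
    then show ?thesis using True by simp
  next
    case False
    then obtain m where m: "m < n" "bit k m \<noteq> bit r m"
      using nat_eq_iff_bits_below[OF assms] by blast
    then have "n - m \<in> {1..n}" "f (n - m) + 1 = 0"
      by (auto simp: f_def)
    then show ?thesis
      using False by (metis finite_atLeastAtMost prod_zero)
  qed
  finally show ?thesis .
qed

lemma inj_on_Zhat: "inj_on (Zhat n) (Pow {1..n})"
proof (rule inj_onI)
  fix S T assume S: "S \<in> Pow {1..n}" and T: "T \<in> Pow {1..n}" and eq: "Zhat n S = Zhat n T"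
  have "i \<in> S \<longleftrightarrow> i \<in> T" if i: "i \<in> {1..n}" for i
  proof -
    have k: "(2::nat) ^ (n - i) < 2 ^ n" using i by simp
    have "Zhat n S $$ (2 ^ (n - i), 2 ^ (n - i)) = Zhat n T $$ (2 ^ (n - i), 2 ^ (n - i))"
      by (simp only: eq)
    then have "zsign n S (2 ^ (n - i)) = zsign n T (2 ^ (n - i))"
      using S T k finite_subset[of _ "{1..n}"] by (simp add: Zhat_eq_mat_diag)
    then show ?thesis using S T i by (simp add: zsign_exp split: if_splits)
  qed
  then show "S = T" using S T by blast
qed

lemma Mch_eq_mat_diag:
  assumes A: "A \<in> carrier_mat (2 ^ n) (2 ^ n)"
  shows "Mch n A = mat_diag (2 ^ n) (\<lambda>r. A $$ (r, r))"
proof -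
  have E: "Eproj n x = mat_diag (2 ^ n) (\<lambda>k. if k = x then 1 else 0)" for x
    by (rule eq_matI) (simp_all add: Eproj_def)
  have "Mch n A = msum (2 ^ n) (\<lambda>x. mat_diag (2 ^ n) (\<lambda>r. A $$ (x, x) * (if r = x then 1 else 0))) {0..<2 ^ n}"
    unfolding Mch_def sosum_def E ketbra_mat_diag[OF A]
    by (intro msum_cong mat_diag_cong) (simp add: if_distrib[of cnj] if_distrib[of "\<lambda>z. z * _"] cong: if_cong)
  also have "\<dots> = mat_diag (2 ^ n) (\<lambda>r. A $$ (r, r))"
    unfolding msum_mat_diag by (rule mat_diag_cong) (simp add: if_distrib[of "\<lambda>z. _ * z"] cong: if_cong)
  finally show ?thesis .
qed

lemma sum_Zhat_eq_mat_diag: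
  assumes A: "A \<in> carrier_mat (2 ^ n) (2 ^ n)"
  shows "sosum (2 ^ n) (\<lambda>S. ketbra (Zhat n S) (Zhat n S)) (Pow {1..n}) A
    = mat_diag (2 ^ n) (\<lambda>r. A $$ (r, r))"
proof -
  define c where "c = complex_of_real (sqrt (2 ^ n))"
  have c: "c * c = 2 ^ n" "cnj c = c" "c \<noteq> 0"
    unfolding c_def by (simp_all flip: of_real_mult)
  have "sosum (2 ^ n) (\<lambda>S. ketbra (Zhat n S) (Zhat n S)) (Pow {1..n}) A
    = msum (2 ^ n) (\<lambda>S. mat_diag (2 ^ n)
        (\<lambda>r. (\<Sum>k<2 ^ n. cnj (zsign n S k / c) * A $$ (k, k)) * (zsign n S r / c))) (Pow {1..n})"
    unfolding sosum_def c_def using A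
    by (intro msum_cong) (simp add: Zhat_eq_mat_diag ketbra_mat_diag finite_subset)
  also have "\<dots> = mat_diag (2 ^ n) (\<lambda>r. A $$ (r, r))"
    unfolding msum_mat_diag
  proof (rule mat_diag_cong)
    fix r :: nat assume r: "r < 2 ^ n"
    have "(\<Sum>S\<in>Pow {1..n}. (\<Sum>k<2 ^ n. cnj (zsign n S k / c) * A $$ (k, k)) * (zsign n S r / c))
        = (\<Sum>k<2 ^ n. A $$ (k, k) / (c * c) * (\<Sum>S\<in>Pow {1..n}. zsign n S k * zsign n S r))"
      unfolding sum_distrib_right sum_distrib_left using c
      by (subst sum.swap) (intro sum.cong refl, simp add: field_simps)
    also have "\<dots> = (\<Sum>k<2 ^ n. A $$ (k, k) / (c * c) * (if k = r then 2 ^ n else 0))"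
      using sum_zsign_mult[OF _ r] by (intro sum.cong refl) (simp only: lessThan_iff)
    also have "\<dots> = A $$ (r, r)"
      using r c by (simp add: if_distrib[of "\<lambda>z. _ * z"] cong: if_cong)
    finally show "(\<Sum>S\<in>Pow {1..n}. (\<Sum>k<2 ^ n. cnj (zsign n S k / c) * A $$ (k, k)) * (zsign n S r / c))
        = A $$ (r, r)" .
  qed
  finally show ?thesis .
qed

section \<open>CNOT and SWAP as permutations of basis indices\<close>

definition cnot_bits :: "nat \<Rightarrow> nat \<Rightarrow> nat \<Rightarrow> nat" where
  "cnot_bits p q r = (if bit r p then flip_bit q r else r)"

definition swap_bits :: "nat \<Rightarrow> nat \<Rightarrow> nat \<Rightarrow> nat" where
  "swap_bits p q r = (if bit r p = bit r q then r else flip_bit p (flip_bit q r))"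

definition gate_bits :: "complex mat \<Rightarrow> nat \<Rightarrow> nat \<Rightarrow> nat \<Rightarrow> nat" where
  "gate_bits U = (if U = CNOT then cnot_bits else swap_bits)"

lemma gate_bits_CNOT [simp]: "gate_bits CNOT = cnot_bits"
  by (simp add: gate_bits_def)

lemma bit_cnot_bits: "bit (cnot_bits p q r) m = (if m = q then bit r q \<noteq> bit r p else bit r m)"
  by (auto simp: cnot_bits_def bit_flip_bit_iff)

lemma bit_swap_bits: "bit (swap_bits p q r) m = (if m = p then bit r q else if m = q then bit r p else bit r m)"
  by (auto simp: swap_bits_def bit_flip_bit_iff)

lemma bit_gate_bits_other: "m \<noteq> p \<Longrightarrow> m \<noteq> q \<Longrightarrow> bit (gate_bits U p q r) m = bit r m"
  by (simp add: gate_bits_def bit_cnot_bits bit_swap_bits)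

lemma gate_bits_involution: "p \<noteq> q \<Longrightarrow> gate_bits U p q (gate_bits U p q r) = r"
  by (rule bit_eqI) (auto simp: gate_bits_def bit_cnot_bits bit_swap_bits)

lemma CNOT_index_bits:
  "CNOT $$ (2 * of_bool a + of_bool b, 2 * of_bool a' + of_bool b') = (if a = a' \<and> b = (b' \<noteq> a') then 1 else 0)"
  by (cases a; cases b; cases a'; cases b') (simp_all add: CNOT_def)

lemma SWAP_index_bits:
  "SWAP $$ (2 * of_bool a + of_bool b, 2 * of_bool a' + of_bool b') = (if a = b' \<and> b = a' then 1 else 0)"
  by (cases a; cases b; cases a'; cases b') (simp_all add: SWAP_def)

lemma CNOT_ne_SWAP: "CNOT \<noteq> SWAP"
proof
  assume "CNOT = SWAP"
  then have "CNOT $$ (1, 1) = SWAP $$ (1, 1)" by simp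
  then show False by (simp add: CNOT_def SWAP_def)
qed

lemma gate_bits_SWAP [simp]: "gate_bits SWAP = swap_bits"
  using CNOT_ne_SWAP by (simp add: gate_bits_def)

lemma qbits_agree_iff_bits_agree:
  assumes "i \<in> {1..n}" "j \<in> {1..n}"
  shows "(\<forall>k\<in>{1..n} - {i, j}. qbit n r k = qbit n c k)
    \<longleftrightarrow> (\<forall>m<n. m \<noteq> n - i \<longrightarrow> m \<noteq> n - j \<longrightarrow> bit r m = bit c m)"
proof
  assume H: "\<forall>k\<in>{1..n} - {i, j}. qbit n r k = qbit n c k"
  show "\<forall>m<n. m \<noteq> n - i \<longrightarrow> m \<noteq> n - j \<longrightarrow> bit r m = bit c m"
  proof (intro allI impI)
    fix m assume m: "m < n" "m \<noteq> n - i" "m \<noteq> n - j"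
    then have "n - m \<in> {1..n} - {i, j}" using assms by auto
    with H have "qbit n r (n - m) = qbit n c (n - m)" by blast
    then show "bit r m = bit c m" using m(1) by (simp add: qbit_eq_of_bool of_bool_eq_iff)
  qed
next
  assume H: "\<forall>m<n. m \<noteq> n - i \<longrightarrow> m \<noteq> n - j \<longrightarrow> bit r m = bit c m"
  show "\<forall>k\<in>{1..n} - {i, j}. qbit n r k = qbit n c k"
  proof
    fix k assume "k \<in> {1..n} - {i, j}"
    then have "n - k < n" "n - k \<noteq> n - i" "n - k \<noteq> n - j" using assms by auto
    with H show "qbit n r k = qbit n c k" by (simp add: qbit_eq_of_bool)
  qed
qed

lemma apply2_eq_perm_mat:
  assumes ij: "i \<in> {1..n}" "j \<in> {1..n}" "i \<noteq> j"
    and f_other: "\<And>r m. m \<noteq> n - i \<Longrightarrow> m \<noteq> n - j \<Longrightarrow> bit (f r) m = bit r m"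
    and U: "\<And>(r::nat) c. U $$ (2 * of_bool (bit r (n - i)) + of_bool (bit r (n - j)),
                       2 * of_bool (bit c (n - i)) + of_bool (bit c (n - j)))
       = (if bit r (n - i) = bit (f c) (n - i) \<and> bit r (n - j) = bit (f c) (n - j) then 1 else 0)"
  shows "apply2 n U i j = perm_mat (2 ^ n) f"
proof (rule eq_matI)
  fix r c assume "r < dim_row (perm_mat (2 ^ n) f)" "c < dim_col (perm_mat (2 ^ n) f)"
  then have rc: "r < 2 ^ n" "c < 2 ^ n" by simp_all
  have ijn: "n - i < n" "n - j < n" "n - i \<noteq> n - j" using ij by auto
  have fc: "f c < 2 ^ n"
  proof (rule less_exp_if_bits_above_eq[OF rc(2)])
    fix m assume "n \<le> m"
    then show "bit (f c) m = bit c m" using ijn by (intro f_other) auto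
  qed
  have "apply2 n U i j $$ (r, c) = (if \<forall>k\<in>{1..n} - {i, j}. qbit n r k = qbit n c k
      then U $$ (2 * qbit n r i + qbit n r j, 2 * qbit n c i + qbit n c j) else 0)"
    using rc by (simp add: apply2_def)
  also have "\<dots> = (if (\<forall>m<n. m \<noteq> n - i \<longrightarrow> m \<noteq> n - j \<longrightarrow> bit r m = bit c m)
      then (if bit r (n - i) = bit (f c) (n - i) \<and> bit r (n - j) = bit (f c) (n - j) then 1 else 0) else 0)"
    unfolding qbits_agree_iff_bits_agree[OF ij(1,2)] unfolding qbit_eq_of_bool U ..
  also have "\<dots> = (if \<forall>m<n. bit r m = bit (f c) m then 1 else 0)"
  proof -
    have "(\<forall>m<n. m \<noteq> n - i \<longrightarrow> m \<noteq> n - j \<longrightarrow> bit r m = bit c m)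
        \<and> bit r (n - i) = bit (f c) (n - i) \<and> bit r (n - j) = bit (f c) (n - j)
      \<longleftrightarrow> (\<forall>m<n. bit r m = bit (f c) m)" (is "?agree \<longleftrightarrow> _")
    proof
      assume ?agree
      then show "\<forall>m<n. bit r m = bit (f c) m"
        by (metis f_other)
    next
      assume "\<forall>m<n. bit r m = bit (f c) m"
      then show ?agree using ijn by (metis f_other)
    qed
    then show ?thesis by (simp only: if_if_eq_conj)
  qed
  also have "\<dots> = perm_mat (2 ^ n) f $$ (r, c)"
    using rc fc by (simp add: nat_eq_iff_bits_below)
  finally show "apply2 n U i j $$ (r, c) = perm_mat (2 ^ n) f $$ (r, c)" .
qed (simp_all add: apply2_def)

lemma apply2_gate_eq_perm_mat:
  assumes ij: "i \<in> {1..n}" "j \<in> {1..n}" "i \<noteq> j" and U: "U \<in> {SWAP, CNOT}"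
  shows "apply2 n U i j = perm_mat (2 ^ n) (gate_bits U (n - i) (n - j))"
proof -
  have pq: "n - i \<noteq> n - j" using ij by auto
  from U consider "U = CNOT" | "U = SWAP" by blast
  then show ?thesis
  proof cases
    case 1
    show ?thesis unfolding 1 gate_bits_CNOT
      by (rule apply2_eq_perm_mat[OF ij]) (use pq in \<open>simp_all add: bit_cnot_bits CNOT_index_bits\<close>)
  next
    case 2
    show ?thesis unfolding 2 gate_bits_SWAP
      by (rule apply2_eq_perm_mat[OF ij]) (simp_all add: bit_swap_bits SWAP_index_bits)
  qed
qed

section \<open>Chains of gates\<close>

definition chain_from :: "nat \<Rightarrow> nat \<Rightarrow> complex mat list \<Rightarrow> complex mat" where
  "chain_from n s us = foldr (\<lambda>(j, U) acc. apply2 n U (j + 1) j * acc)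
                         (zip [s..<s + length us] us) (1\<^sub>m (2 ^ n))"

lemma chain_eq_chain_from: "chain n us = chain_from n 1 us"
  by (simp add: chain_def chain_from_def add.commute)

lemma chain_from_Nil: "chain_from n s [] = 1\<^sub>m (2 ^ n)"
  by (simp add: chain_from_def)

lemma chain_from_Cons: "chain_from n s (U # us) = apply2 n U (s + 1) s * chain_from n (s + 1) us"
proof -
  have "[s..<s + length (U # us)] = s # [s + 1..<s + 1 + length us]"
    by (simp add: upt_rec)
  then show ?thesis by (simp add: chain_from_def)
qed

fun chain_bits :: "nat \<Rightarrow> nat \<Rightarrow> complex mat list \<Rightarrow> nat \<Rightarrow> nat" where
  "chain_bits n s [] = id"
| "chain_bits n s (U # us) = gate_bits U (n - (s + 1)) (n - s) \<circ> chain_bits n (s + 1) us"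

lemma bit_chain_bits_above:
  "1 \<le> s \<Longrightarrow> s + length us \<le> n \<Longrightarrow> n - s < m \<Longrightarrow> bit (chain_bits n s us r) m = bit r m"
proof (induction us arbitrary: s)
  case (Cons U us)
  then show ?case by (simp add: bit_gate_bits_other)
qed simp

lemma inj_chain_bits: "s + length us \<le> n \<Longrightarrow> inj (chain_bits n s us)"
proof (induction us arbitrary: s)
  case (Cons U us)
  have "n - (s + 1) \<noteq> n - s" using Cons.prems by simp
  then have "inj (gate_bits U (n - (s + 1)) (n - s))"
    by (metis gate_bits_involution injI)
  moreover have "inj (chain_bits n (s + 1) us)" using Cons by simp
  ultimately show ?case unfolding chain_bits.simps by (rule inj_compose)
qed simp

lemma chain_bits_less:
  assumes "1 \<le> s" "s + length us \<le> n" "r < 2 ^ n"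
  shows "chain_bits n s us r < 2 ^ n"
  using assms by (intro less_exp_if_bits_above_eq[OF assms(3)]) (simp add: bit_chain_bits_above)

lemma chain_from_eq_perm_mat:
  "1 \<le> s \<Longrightarrow> s + length us \<le> n \<Longrightarrow> set us \<subseteq> {SWAP, CNOT}
    \<Longrightarrow> chain_from n s us = perm_mat (2 ^ n) (chain_bits n s us)"
proof (induction us arbitrary: s)
  case Nil
  then show ?case by (simp only: chain_from_Nil chain_bits.simps perm_mat_id)
next
  case (Cons U us)
  have gate: "apply2 n U (s + 1) s = perm_mat (2 ^ n) (gate_bits U (n - (s + 1)) (n - s))"
    using Cons.prems by (intro apply2_gate_eq_perm_mat) auto
  have IH: "chain_from n (s + 1) us = perm_mat (2 ^ n) (chain_bits n (s + 1) us)"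
    using Cons by simp
  have "chain_bits n (s + 1) us ` {..<2 ^ n} \<subseteq> {..<2 ^ n}"
    using Cons.prems by (auto intro: chain_bits_less)
  then show ?case
    unfolding chain_from_Cons chain_bits.simps gate IH by (rule perm_mat_mult)
qed

text \<open>The support S of g^dagger Z_s g = Z_S for the chain g of gates starting at qubit s.\<close>
fun chain_support :: "nat \<Rightarrow> complex mat list \<Rightarrow> nat set" where
  "chain_support s [] = {s}"
| "chain_support s (U # us) = (if U = CNOT then insert s (chain_support (s + 1) us) else chain_support (s + 1) us)"

lemma mem_chain_support:
  "i \<in> chain_support s us
    \<longleftrightarrow> i = s + length us \<or> (s \<le> i \<and> i < s + length us \<and> us ! (i - s) = CNOT)"
proof (induction us arbitrary: s)
  case (Cons U us)
  show ?case
  proof (cases "i = s")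
    case False
    then have "(U # us) ! (i - s) = us ! (i - (s + 1))" if "s \<le> i"
      using that by (simp add: nth_Cons' Suc_diff_Suc)
    with False show ?thesis by (auto simp: Cons.IH)
  qed (use Cons.IH[of "s + 1"] in auto)
qed auto

lemma finite_chain_support: "finite (chain_support s us)"
  by (induction us arbitrary: s) simp_all

lemma chain_support_subset: "chain_support s us \<subseteq> {s..s + length us}"
  by (auto simp: mem_chain_support)

lemma zsign_singleton: "zsign n {i} r = (if bit r (n - i) then -1 else 1)"
  by (simp add: zsign_def)

text \<open>Conjugation by U_{s+1,s} turns Z_s into Z_s Z_{s+1} (CNOT) or Z_{s+1} (SWAP), and the later
  gates of the chain do not touch qubit s.\<close>
lemma zsign_chain_bits:
  "1 \<le> s \<Longrightarrow> s + length us \<le> n \<Longrightarrow> zsign n {s} (chain_bits n s us r) = zsign n (chain_support s us) r"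
proof (induction us arbitrary: s)
  case Nil
  then show ?case by simp
next
  case (Cons U us)
  define x where "x = chain_bits n (s + 1) us r"
  have step: "chain_bits n s (U # us) r = gate_bits U (n - (s + 1)) (n - s) x"
    by (simp add: x_def)
  have IH: "zsign n {s + 1} x = zsign n (chain_support (s + 1) us) r"
    using Cons by (simp add: x_def)
  have x_high: "bit x (n - s) = bit r (n - s)"
    using Cons.prems by (simp add: x_def bit_chain_bits_above)
  have s_notin: "s \<notin> chain_support (s + 1) us"
    using chain_support_subset[of "s + 1" us] by auto
  have pq: "n - (s + 1) \<noteq> n - s" using Cons.prems by simp
  show ?case
  proof (cases "U = CNOT")
    case True
    then have "zsign n {s} (chain_bits n s (U # us) r) = zsign n {s} r * zsign n {s + 1} x"
      unfolding step by (simp add: zsign_singleton gate_bits_def bit_cnot_bits x_high)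
    then show ?thesis
      using True IH s_notin by (simp add: zsign_def finite_chain_support)
  next
    case False
    then show ?thesis
      using IH pq unfolding step by (simp add: zsign_singleton gate_bits_def bit_swap_bits)
  qed
qed

definition gate_lists :: "nat \<Rightarrow> complex mat list set" where
  "gate_lists n = {us. length us < n \<and> set us \<subseteq> {SWAP, CNOT}}"

lemma chain_eq_perm_mat:
  assumes "us \<in> gate_lists n"
  shows "chain n us = perm_mat (2 ^ n) (chain_bits n 1 us)"
  unfolding chain_eq_chain_from using assms by (intro chain_from_eq_perm_mat) (auto simp: gate_lists_def)

lemma omega_dag_chain_Zhat:
  assumes "us \<in> gate_lists n"
  shows "omega_dag (chain n us) (Zhat n {1}) = Zhat n (chain_support 1 us)"
proof -
  have len: "1 + length us \<le> n" using assms by (simp add: gate_lists_def)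
  have "chain_bits n 1 us ` {..<2 ^ n} \<subseteq> {..<2 ^ n}"
    using len by (auto intro: chain_bits_less)
  moreover have "inj_on (chain_bits n 1 us) {..<2 ^ n}"
    using inj_chain_bits[of 1 us n] len by (simp add: inj_on_subset[of _ UNIV])
  ultimately show ?thesis
    using len by (simp add: chain_eq_perm_mat[OF assms] Zhat_eq_mat_diag finite_chain_support
        omega_dag_perm_mat_mat_diag comp_def zsign_chain_bits)
qed

definition gates_of_support :: "nat set \<Rightarrow> complex mat list" where
  "gates_of_support T = map (\<lambda>i. if i \<in> T then CNOT else SWAP) [1..<Max T]"

lemma Max_chain_support: "Max (chain_support s us) = s + length us"
  by (rule Max_eqI) (auto simp: finite_chain_support mem_chain_support)

lemma gates_of_support_chain_support:
  assumes "set us \<subseteq> {SWAP, CNOT}"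
  shows "gates_of_support (chain_support 1 us) = us"
proof -
  have len: "length (gates_of_support (chain_support 1 us)) = length us"
    by (simp only: gates_of_support_def length_map length_upt Max_chain_support diff_add_inverse)
  show ?thesis
  proof (rule nth_equalityI[OF len])
    fix i assume "i < length (gates_of_support (chain_support 1 us))"
    then have i: "i < length us" by (simp only: len)
    have "gates_of_support (chain_support 1 us) ! i = (if i + 1 \<in> chain_support 1 us then CNOT else SWAP)"
      using i by (simp add: gates_of_support_def Max_chain_support del: upt_Suc)
    moreover have "i + 1 \<in> chain_support 1 us \<longleftrightarrow> us ! i = CNOT"
      using i by (simp add: mem_chain_support)
    moreover have "us ! i \<in> {SWAP, CNOT}" using assms i by (auto dest: nth_mem)
    ultimately show "gates_of_support (chain_support 1 us) ! i = us ! i" by auto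
  qed
qed

lemma chain_support_gates_of_support:
  assumes "finite T" "T \<noteq> {}" "0 \<notin> T"
  shows "chain_support 1 (gates_of_support T) = T"
proof (rule Set.set_eqI)
  fix i
  have SWAP: "SWAP \<noteq> CNOT" using CNOT_ne_SWAP by metis
  have Max: "Max T \<in> T" "\<And>i. i \<in> T \<Longrightarrow> i \<le> Max T" using assms by simp_all
  then have "1 \<le> Max T" using assms(3) by (metis One_nat_def less_one not_le)
  then have len: "1 + length (gates_of_support T) = Max T"
    by (simp add: gates_of_support_def)
  have nth: "gates_of_support T ! (i - 1) = (if i \<in> T then CNOT else SWAP)" if "1 \<le> i" "i < Max T"
    using that by (simp add: gates_of_support_def del: upt_Suc)
  show "i \<in> chain_support 1 (gates_of_support T) \<longleftrightarrow> i \<in> T"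
  proof (cases "i = Max T")
    case False
    then show ?thesis
      unfolding mem_chain_support len using nth SWAP Max assms(3)
      by (metis One_nat_def less_one nat_less_le not_le)
  qed (use Max in \<open>simp only: mem_chain_support len simp_thms\<close>)
qed

lemma bij_betw_chain_support: "bij_betw (chain_support 1) (gate_lists n) (Pow {1..n} - {{}})"
proof (rule bij_betw_byWitness[where f' = gates_of_support])
  show "\<forall>us\<in>gate_lists n. gates_of_support (chain_support 1 us) = us"
    unfolding gate_lists_def using gates_of_support_chain_support by blast
  show "\<forall>T\<in>Pow {1..n} - {{}}. chain_support 1 (gates_of_support T) = T"
  proof
    fix T assume "T \<in> Pow {1..n} - {{}}"
    then have "finite T" "T \<noteq> {}" "0 \<notin> T" by (auto intro: finite_subset)
    then show "chain_support 1 (gates_of_support T) = T" by (rule chain_support_gates_of_support)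
  qed
  show "chain_support 1 ` gate_lists n \<subseteq> Pow {1..n} - {{}}"
    using chain_support_subset[of 1] by (force simp: gate_lists_def mem_chain_support)
  show "gates_of_support ` (Pow {1..n} - {{}}) \<subseteq> gate_lists n"
  proof
    fix us assume "us \<in> gates_of_support ` (Pow {1..n} - {{}})"
    then obtain T where T: "T \<subseteq> {1..n}" "T \<noteq> {}" and us: "us = gates_of_support T" by blast
    have "Max T \<in> {1..n}" using T by (meson Max_in finite_atLeastAtMost finite_subset subsetD)
    then show "us \<in> gate_lists n" by (auto simp: us gate_lists_def gates_of_support_def)
  qed
qed

lemma inj_on_chain: "inj_on (chain n) (gate_lists n)"
proof (rule inj_onI)
  fix us vs assume us: "us \<in> gate_lists n" and vs: "vs \<in> gate_lists n" and "chain n us = chain n vs"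
  then have "Zhat n (chain_support 1 us) = Zhat n (chain_support 1 vs)"
    by (metis omega_dag_chain_Zhat)
  moreover have "chain_support 1 us \<in> Pow {1..n}" "chain_support 1 vs \<in> Pow {1..n}"
    using us vs bij_betwE[OF bij_betw_chain_support] by blast+
  ultimately have "chain_support 1 us = chain_support 1 vs"
    by (rule inj_onD[OF inj_on_Zhat])
  then show "us = vs"
    by (rule inj_onD[OF bij_betw_imp_inj_on[OF bij_betw_chain_support] _ us vs])
qed

lemma Nset_eq_image_chain:
  assumes "1 \<le> n"
  shows "Nset n = chain n ` gate_lists n"
proof -
  have "chain n [] = 1\<^sub>m (2 ^ n)" by (simp add: chain_def)
  moreover have "gate_lists n = {[]} \<union> {us. length us \<in> {1..n - 1} \<and> set us \<subseteq> {SWAP, CNOT}}"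
    using assms by (auto simp: gate_lists_def Suc_le_eq)
  ultimately show ?thesis by (auto simp: Nset_def)
qed

lemma sum_Zhat_eq_Idhat_plus_Nset:
  assumes n: "1 \<le> n" and A: "A \<in> carrier_mat (2 ^ n) (2 ^ n)"
  shows "sosum (2 ^ n) (\<lambda>S. ketbra (Zhat n S) (Zhat n S)) (Pow {1..n}) A
    = soplus (2 ^ n) (ketbra (Idhat n) (Idhat n))
        (sosum (2 ^ n) (\<lambda>g. omega_dag g \<circ> ketbra (Zhat n {1}) (Zhat n {1}) \<circ> omega g) (Nset n)) A"
proof -
  define K where "K = (\<lambda>S. ketbra (Zhat n S) (Zhat n S) A)"
  define G where "G = (\<lambda>g. (omega_dag g \<circ> ketbra (Zhat n {1}) (Zhat n {1}) \<circ> omega g) A)"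
  have K_chain: "K (chain_support 1 us) = G (chain n us)" if us: "us \<in> gate_lists n" for us
  proof -
    have g: "chain n us \<in> carrier_mat (2 ^ n) (2 ^ n)"
      by (simp add: chain_eq_perm_mat[OF us])
    show ?thesis
      unfolding K_def G_def omega_dag_ketbra_omega[OF g Zhat_carrier_mat A] omega_dag_chain_Zhat[OF us] ..
  qed
  have "msum (2 ^ n) K (Pow {1..n}) = K {} + msum (2 ^ n) K (Pow {1..n} - {{}})"
    by (rule msum_remove) (simp_all add: K_def ketbra_carrier_mat Zhat_carrier_mat)
  also have "msum (2 ^ n) K (Pow {1..n} - {{}}) = msum (2 ^ n) (K \<circ> chain_support 1) (gate_lists n)"
    using bij_betw_chain_support by (metis bij_betw_def msum_reindex)
  also have "\<dots> = msum (2 ^ n) (G \<circ> chain n) (gate_lists n)"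
    by (rule msum_cong) (simp only: comp_apply K_chain)
  also have "\<dots> = msum (2 ^ n) G (Nset n)"
    unfolding Nset_eq_image_chain[OF n] by (rule msum_reindex[symmetric, OF inj_on_chain])
  finally show ?thesis
    by (simp only: soplus_def sosum_def K_def G_def Idhat_eq_Zhat_empty)
qed

theorem lemma2:
  fixes n :: nat
  assumes "n \<ge> 1"
  shows "\<forall>A \<in> carrier_mat (2 ^ n) (2 ^ n).
           Mch n A = sosum (2 ^ n) (\<lambda>S. ketbra (Zhat n S) (Zhat n S)) (Pow {1..n}) A
         \<and> sosum (2 ^ n) (\<lambda>S. ketbra (Zhat n S) (Zhat n S)) (Pow {1..n}) A
           = soplus (2 ^ n) (ketbra (Idhat n) (Idhat n))
               (sosum (2 ^ n) (\<lambda>g. omega_dag g \<circ> ketbra (Zhat n {1}) (Zhat n {1}) \<circ> omega g)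
                  (Nset n)) A"
proof (intro ballI conjI)
  fix A :: "complex mat" assume A: "A \<in> carrier_mat (2 ^ n) (2 ^ n)"
  show "Mch n A = sosum (2 ^ n) (\<lambda>S. ketbra (Zhat n S) (Zhat n S)) (Pow {1..n}) A"
    unfolding Mch_eq_mat_diag[OF A] sum_Zhat_eq_mat_diag[OF A] ..
  show "sosum (2 ^ n) (\<lambda>S. ketbra (Zhat n S) (Zhat n S)) (Pow {1..n}) A
      = soplus (2 ^ n) (ketbra (Idhat n) (Idhat n))
          (sosum (2 ^ n) (\<lambda>g. omega_dag g \<circ> ketbra (Zhat n {1}) (Zhat n {1}) \<circ> omega g) (Nset n)) A"
    by (rule sum_Zhat_eq_Idhat_plus_Nset[OF assms A])
qed

end
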